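(* Let $K$ be a finite field of characteristic $p$, let $L$ be the quadratic extension of $K$, and let $d$ be an integer with $\gcd(d,|L|-1)=1$ that is degenerate over $K$ but not over $L$. Then $V_{L,d}=[K:\mathbb{F}_p]$, and there exists $a\in L^\times$ with $W_{L,d}(a)=-|K|$.
   Context: $\psi_L(x)=\exp(2\pi i\,\mathrm{Tr}_{L/\mathbb{F}_p}(x)/p)$, $W_{L,d}(a)=\sum_{x\in L}\psi_L(x^d+ax)$, and $V_{L,d}=\min_{a\in L^\times}\nu_p(W_{L,d}(a))$ with $\nu_p$ the $p$-adic valuation. $d$ is degenerate over a field $F$ of characteristic $p$ if $d\equiv p^j\pmod{|F|-1}$ for some integer $j$. *)

theory Defs
  imports Complex_Main "HOL-Computational_Algebra.Polynomial" "HOL-Library.Extended_Real"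
    "HOL-Number_Theory.Cong"
begin

definition is_subfield :: "'a::field set \<Rightarrow> bool" where
  "is_subfield K \<longleftrightarrow> 0 \<in> K \<and> 1 \<in> K \<and>
     (\<forall>x\<in>K. \<forall>y\<in>K. x + y \<in> K \<and> x * y \<in> K) \<and>
     (\<forall>x\<in>K. - x \<in> K \<and> inverse x \<in> K)"

definition fp_degree :: "'a::{field,finite} itself \<Rightarrow> nat" where
  "fp_degree _ = (THE m. card (UNIV :: 'a set) = CHAR('a) ^ m)"

definition abs_trace :: "'a::{field,finite} \<Rightarrow> 'a" where
  "abs_trace x = (\<Sum>i<fp_degree TYPE('a). x ^ (CHAR('a) ^ i))"

definition psi :: "'a::{field,finite} \<Rightarrow> complex" where
  "psi x = exp (2 * complex_of_real pi * \<i> *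
      of_nat (THE k. k < CHAR('a) \<and> of_nat k = abs_trace x) / of_nat CHAR('a))"

text \<open>Weil sum W_{L,d}(a) = sum_{x in L} psi(x^d + a x) (d an integer; 0^d = 0 for d<0).\<close>
definition weil_sum :: "int \<Rightarrow> 'a::{field,finite} \<Rightarrow> complex" where
  "weil_sum d a = (\<Sum>x\<in>UNIV. psi (x powi d + a * x))"

text \<open>p-adic valuation (normalised by nu_p(p) = 1) of an algebraic integer z of the cyclotomic
  field Q(zeta_p) (where there is a unique prime above p):
  nu_p(z) = sup { a/b : b > 0, z^b / p^a is an algebraic integer }, which is +infinity for z = 0.\<close>
definition nu_p :: "nat \<Rightarrow> complex \<Rightarrow> ereal" where
  "nu_p p z = Sup {ereal (real a / real b) | a b. b > 0 \<and>
                     algebraic_int (z ^ b / of_nat p ^ a)}"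

definition V_val :: "'a::{field,finite} itself \<Rightarrow> int \<Rightarrow> ereal" where
  "V_val _ d = Min ((\<lambda>a::'a. nu_p CHAR('a) (weil_sum d a)) ` (UNIV - {0}))"

definition degenerate :: "nat \<Rightarrow> nat \<Rightarrow> int \<Rightarrow> bool" where
  "degenerate p q d \<longleftrightarrow> (\<exists>j::nat. [d = int p ^ j] (mod (int q - 1)))"

end

(*
  Let q = |K| = p^n and Q = |L| = q^2. Since d \<equiv> p^j (mod q - 1), the map x \<mapsto> x^d agrees with a
  Frobenius power on K. Substituting x \<mapsto> c x for c \<in> K^\<times> and averaging over c shows
  W(a) = q (N(a) - 1), where N(a) counts the K^\<times>-orbits of those x \<noteq> 0 on which the additive
  character is trivial along K; hence p^n divides every W(a), and V \<ge> n.
  The power moments \<Sum>_a W(a) = Q and \<Sum>_a W(a)^2 = Q^2 (with W(0) = 0) force either N(a) = 0,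
  i.e. W(a) = -q, for some a \<noteq> 0, or N(a) = q + 1 for some a \<noteq> 0. In the latter case
  \<psi>(x^d) \<psi>(a x) = 1 for all x, which makes the inverse of x \<mapsto> x^d additive; composed with a
  Frobenius power it is then an automorphism of L fixing K, hence the identity or x \<mapsto> x^q, and
  d would be degenerate over L. Finally \<nu>_p(-q) = n.
*)

theory Submission
  imports Defs "HOL-Computational_Algebra.Primes" "HOL-Analysis.Complex_Transcendental"
begin

section \<open>Finite fields\<close>

lemma prime_CHAR_finite_field: "prime CHAR('a::{field,finite})"
  by (rule prime_CHAR_semidom) (rule finite_imp_CHAR_pos; simp)

lemma
  fixes k l :: nat
  assumes "l < k"
  shows finite_power_eq_power: "finite {x::'a::idom. x ^ k = x ^ l}"
    and card_power_eq_power_le: "card {x::'a::idom. x ^ k = x ^ l} \<le> k"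
proof -
  define P where "P = monom (1::'a) k + monom (- 1) l"
  have deg: "degree P = k"
    unfolding P_def using assms by (subst degree_add_eq_left) (auto simp: degree_monom_eq)
  have "P \<noteq> 0"
    using assms deg by (intro notI) simp
  have roots: "{x. x ^ k = x ^ l} = {x. poly P x = 0}"
    unfolding P_def by (simp add: poly_monom)
  show "finite {x::'a. x ^ k = x ^ l}"
    unfolding roots using \<open>P \<noteq> 0\<close> by (rule poly_roots_finite)
  show "card {x::'a. x ^ k = x ^ l} \<le> k"
    unfolding roots using card_poly_roots_bound[OF \<open>P \<noteq> 0\<close>] deg by simp
qed

lemma power_card_eq_self_iff:
  fixes A :: "'a::idom set"
  assumes "finite A" "2 \<le> card A" "\<And>y. y \<in> A \<Longrightarrow> y ^ card A = y"
  shows "x ^ card A = x \<longleftrightarrow> x \<in> A"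
proof -
  let ?R = "{x::'a. x ^ card A = x ^ 1}"
  have sub: "A \<subseteq> ?R" using assms(3) by auto
  have fin: "finite ?R" and le: "card ?R \<le> card A"
    using assms(2) finite_power_eq_power[of 1 "card A"] card_power_eq_power_le[of 1 "card A"] by auto
  have "card A \<le> card ?R" using fin sub by (rule card_mono)
  hence "A = ?R" using card_subset_eq[OF fin sub] le by simp
  thus ?thesis by auto
qed

lemma
  assumes "is_subfield K"
  shows subfield_0: "0 \<in> K" and subfield_1: "1 \<in> K"
    and subfield_add: "x \<in> K \<Longrightarrow> y \<in> K \<Longrightarrow> x + y \<in> K"
    and subfield_mult: "x \<in> K \<Longrightarrow> y \<in> K \<Longrightarrow> x * y \<in> K"
    and subfield_uminus: "x \<in> K \<Longrightarrow> - x \<in> K"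
    and subfield_inverse: "x \<in> K \<Longrightarrow> inverse x \<in> K"
  using assms unfolding is_subfield_def by auto

lemma subfield_diff: "is_subfield K \<Longrightarrow> x \<in> K \<Longrightarrow> y \<in> K \<Longrightarrow> x - y \<in> K"
  using subfield_add[of K x "- y"] subfield_uminus[of K y] by simp

lemma subfield_divide: "is_subfield K \<Longrightarrow> x \<in> K \<Longrightarrow> y \<in> K \<Longrightarrow> x / y \<in> K"
  using subfield_mult[of K x "inverse y"] subfield_inverse[of K y] by (simp add: divide_inverse)

lemma subfield_UNIV: "is_subfield (UNIV :: 'a::field set)"
  unfolding is_subfield_def by simp

lemma card_subfield_ge_2:
  fixes K :: "'a::field set"
  assumes "is_subfield K" "finite K"
  shows "2 \<le> card K"
proof -
  have "{0::'a, 1} \<subseteq> K" using subfield_0[OF assms(1)] subfield_1[OF assms(1)] by simp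
  hence "card {0::'a, 1} \<le> card K" by (rule card_mono[OF assms(2)])
  thus ?thesis by simp
qed

lemma subfield_power_card_minus_1:
  assumes K: "is_subfield K" "finite K" and c: "c \<in> K" "c \<noteq> 0"
  shows "c ^ (card K - 1) = 1"
proof -
  have "(\<Prod>y\<in>K-{0}. c * y) = (\<Prod>y\<in>K-{0}. y)"
    by (rule prod.reindex_bij_witness[of _ "\<lambda>y. y / c" "\<lambda>y. c * y"])
       (use K c in \<open>auto simp: subfield_divide subfield_mult\<close>)
  moreover have "(\<Prod>y\<in>K-{0}. y) \<noteq> 0" using K by simp
  moreover have "card (K - {0}) = card K - 1" using subfield_0[OF K(1)] by simp
  ultimately show ?thesis by (simp add: prod.distrib)
qed

lemma subfield_power_card:
  assumes "is_subfield K" "finite K" "c \<in> K"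
  shows "c ^ card K = c"
proof (cases "c = 0")
  case False
  obtain k where k: "card K = Suc k"
    using card_subfield_ge_2[OF assms(1,2)] by (cases "card K") auto
  thus ?thesis using subfield_power_card_minus_1[OF assms False] by simp
qed (use card_subfield_ge_2[OF assms(1,2)] in simp)

lemma subfield_iff_power_card:
  assumes "is_subfield K" "finite K"
  shows "x \<in> K \<longleftrightarrow> x ^ card K = x"
  by (rule power_card_eq_self_iff[symmetric])
     (use assms card_subfield_ge_2 subfield_power_card in auto)

lemma of_nat_power_CHAR: "(of_nat k :: 'a::{field,finite}) ^ CHAR('a) = of_nat k"
proof (induction k)
  case (Suc k)
  thus ?case using freshmans_dream[OF prime_CHAR_finite_field[where 'a='a] refl, of "of_nat k" 1]
    by (simp add: add.commute)
qed (simp add: prime_gt_0_nat[OF prime_CHAR_finite_field])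

lemma power_CHAR_eq_self_iff:
  "(y::'a::{field,finite}) ^ CHAR('a) = y \<longleftrightarrow> (\<exists>k<CHAR('a). y = of_nat k)"
proof -
  let ?A = "of_nat ` {..<CHAR('a)} :: 'a set"
  have "inj_on (of_nat :: nat \<Rightarrow> 'a) {..<CHAR('a)}"
    by (rule inj_onI) (auto simp: of_nat_eq_iff_cong_CHAR cong_def)
  hence "card ?A = CHAR('a)" by (simp add: card_image)
  moreover have "2 \<le> CHAR('a)" by (rule prime_ge_2_nat[OF prime_CHAR_finite_field])
  ultimately have "y ^ CHAR('a) = y \<longleftrightarrow> y \<in> ?A"
    using power_card_eq_self_iff[of ?A y] of_nat_power_CHAR by force
  thus ?thesis by auto
qed

lemma power_int_cong:
  fixes x :: "'a::field"
  assumes "x \<noteq> 0" "x ^ N = 1" "[a = b] (mod int N)"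
  shows "x powi a = x powi b"
proof -
  obtain k where k: "b = a + int N * k" using assms(3) unfolding cong_iff_lin by blast
  have "x powi b = x powi a * (x ^ N) powi k"
    unfolding k using assms(1) by (simp add: power_int_add power_int_mult)
  thus ?thesis using assms(2) by simp
qed

lemma degenerate_if_power_int_eq_frobenius:
  assumes "\<And>x::'a::{field,finite}. x powi d = x ^ (CHAR('a) ^ i)"
  shows "degenerate CHAR('a) (card (UNIV::'a set)) d"
proof -
  define N where "N = card (UNIV::'a set) - 1"
  have N: "int N = int (card (UNIV::'a set)) - 1" "N > 0"
    using card_subfield_ge_2[OF subfield_UNIV, where 'a='a] unfolding N_def by auto
  define r where "r = nat ((d - int (CHAR('a) ^ i)) mod int N)"
  have r: "int r = (d - int (CHAR('a) ^ i)) mod int N" "r < N"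
    using N(2) unfolding r_def by (simp_all add: nat_less_iff)
  have "x ^ r = 1" if "x \<noteq> 0" for x :: 'a
  proof -
    have "x ^ N = 1"
      unfolding N_def by (rule subfield_power_card_minus_1[OF subfield_UNIV]) (use that in auto)
    moreover have "[d - int (CHAR('a) ^ i) = int r] (mod int N)" unfolding r(1) cong_def by simp
    ultimately have "x powi (d - int (CHAR('a) ^ i)) = x powi int r"
      by (rule power_int_cong[OF that])
    moreover have "x powi int (CHAR('a) ^ i) = x powi d"
      using assms[of x] by (simp only: power_int_of_nat)
    ultimately show ?thesis using that by (simp add: power_int_diff)
  qed
  have "r = 0"
  proof (rule ccontr)
    assume "r \<noteq> 0"
    have "UNIV - {0} \<subseteq> {x::'a. x ^ r = x ^ 0}" using \<open>\<And>x. x \<noteq> 0 \<Longrightarrow> x ^ r = 1\<close> by auto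
    hence "card (UNIV - {0::'a}) \<le> card {x::'a. x ^ r = x ^ 0}"
      using finite_power_eq_power[of 0 r] \<open>r \<noteq> 0\<close> by (intro card_mono) auto
    also have "\<dots> \<le> r" using card_power_eq_power_le[of 0 r] \<open>r \<noteq> 0\<close> by simp
    finally show False using r(2) unfolding N_def by simp
  qed
  hence "[d = int (CHAR('a) ^ i)] (mod int N)"
    using r(1) by (simp add: cong_iff_dvd_diff mod_eq_0_iff_dvd)
  thus ?thesis unfolding degenerate_def N(1) by (auto simp: of_nat_power)
qed

lemma card_dvd_card_if_mult_stable:
  fixes G S :: "'a::field set"
  assumes "finite S" "0 \<notin> S" "1 \<in> G"
    and G_mult: "\<And>x y. x \<in> G \<Longrightarrow> y \<in> G \<Longrightarrow> x * y \<in> G"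
    and G_inverse: "\<And>x. x \<in> G \<Longrightarrow> inverse x \<in> G"
    and S_stable: "\<And>x c. x \<in> S \<Longrightarrow> c \<in> G \<Longrightarrow> c * x \<in> S"
  shows "card G dvd card S"
proof -
  define r where "r = {(x, y). x \<in> S \<and> y \<in> S \<and> (\<exists>c\<in>G. y = c * x)}"
  have "equiv S r"
  proof (rule equivI)
    show "r \<subseteq> S \<times> S" unfolding r_def by auto
    show "refl_on S r" unfolding r_def refl_on_def using \<open>1 \<in> G\<close> by force
    show "sym r"
    proof (rule symI)
      fix x y assume "(x, y) \<in> r"
      then obtain c where c: "x \<in> S" "y \<in> S" "c \<in> G" "y = c * x" unfolding r_def by blast
      hence "c \<noteq> 0" using \<open>0 \<notin> S\<close> by auto
      hence "x = inverse c * y" using c by simp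
      thus "(y, x) \<in> r" unfolding r_def using c G_inverse by blast
    qed
    show "trans r"
    proof (rule transI)
      fix x y z assume "(x, y) \<in> r" "(y, z) \<in> r"
      then obtain c e where ce: "x \<in> S" "z \<in> S" "c \<in> G" "e \<in> G" "y = c * x" "z = e * y"
        unfolding r_def by blast
      hence "z = (e * c) * x" by (simp add: mult.assoc)
      thus "(x, z) \<in> r" unfolding r_def using ce G_mult by blast
    qed
  qed
  moreover have "card G dvd card X" if "X \<in> S // r" for X
  proof -
    from that obtain x where x: "x \<in> S" "X = r `` {x}" by (metis quotientE)
    have "X = (\<lambda>c. c * x) ` G" unfolding x(2) r_def using x(1) S_stable by auto
    moreover have "inj_on (\<lambda>c. c * x) G" using x(1) \<open>0 \<notin> S\<close> by (auto intro: inj_onI)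
    ultimately show ?thesis by (simp add: card_image)
  qed
  ultimately show ?thesis using \<open>finite S\<close> by (rule equiv_imp_dvd_card[rotated])
qed

lemma exists_eq_sum_if_sum_squares_eq:
  fixes v :: "'b \<Rightarrow> int"
  assumes "finite A" "\<And>a. a \<in> A \<Longrightarrow> 0 \<le> v a"
    and "(\<Sum>a\<in>A. v a * v a) = (\<Sum>a\<in>A. v a) * (\<Sum>a\<in>A. v a)" "(\<Sum>a\<in>A. v a) \<noteq> 0"
  shows "\<exists>a\<in>A. v a = (\<Sum>a\<in>A. v a)"
proof -
  define s where "s = (\<Sum>a\<in>A. v a)"
  have nonneg: "0 \<le> v a * (s - v a)" if "a \<in> A" for a
    using assms(1,2) that member_le_sum[of a A v] unfolding s_def by simp
  have "(\<Sum>a\<in>A. s * v a) = s * s"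
    unfolding s_def by (rule sum_distrib_left[symmetric])
  moreover have "(\<Sum>a\<in>A. v a * (s - v a)) = (\<Sum>a\<in>A. s * v a) - (\<Sum>a\<in>A. v a * v a)"
    by (simp add: right_diff_distrib sum_subtractf mult.commute)
  ultimately have "(\<Sum>a\<in>A. v a * (s - v a)) = s * s - (\<Sum>a\<in>A. v a * v a)" by simp
  hence "(\<Sum>a\<in>A. v a * (s - v a)) = 0" using assms(3) unfolding s_def[symmetric] by simp
  hence zero: "v a * (s - v a) = 0" if "a \<in> A" for a
    using sum_nonneg_eq_0_iff[OF assms(1), of "\<lambda>a. v a * (s - v a)"] nonneg that by blast
  have "\<not> (\<forall>a\<in>A. v a = 0)"
  proof
    assume "\<forall>a\<in>A. v a = 0"
    hence "(\<Sum>a\<in>A. v a) = 0" by simp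
    thus False using assms(4) by simp
  qed
  then obtain a where "a \<in> A" "v a \<noteq> 0" by blast
  thus ?thesis using zero[of a] unfolding s_def by auto
qed

lemma nu_p_of_int_ge:
  assumes "p > 1"
  shows "nu_p p (of_int (int p ^ k * z)) \<ge> ereal (real k)"
proof -
  have "(of_int (int p ^ k * z) :: complex) ^ 1 / of_nat p ^ k = of_int z"
    using assms by simp
  hence "algebraic_int ((of_int (int p ^ k * z) :: complex) ^ 1 / of_nat p ^ k)"
    by (simp add: int_imp_algebraic_int)
  hence "ereal (real k / real (1::nat)) \<le> nu_p p (of_int (int p ^ k * z))"
    unfolding nu_p_def by (intro Sup_upper) blast
  thus ?thesis by simp
qed

lemma not_algebraic_int_sign_div_power:
  assumes "p > 1" "e > 0"
  shows "\<not> algebraic_int ((-1) ^ b / of_nat p ^ e :: complex)"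
proof
  define z where "z = ((-1) ^ b / of_nat p ^ e :: complex)"
  assume "algebraic_int z"
  moreover have "z \<in> \<rat>" unfolding z_def by (intro Rats_divide Rats_power) auto
  ultimately have "z \<in> \<int>" by (rule rational_algebraic_int_is_int)
  then obtain n where "z = of_int n" by (elim Ints_cases)
  hence "(of_int (n * int p ^ e) :: complex) = (-1) ^ b" using assms(1) by (simp add: z_def field_simps)
  also have "((-1) ^ b :: complex) = of_int ((-1) ^ b)" by simp
  finally have "n * int p ^ e = (-1) ^ b" by (simp only: of_int_eq_iff)
  hence "int p ^ e dvd (-1) ^ b" by (metis dvd_triv_right)
  moreover have "((-1) ^ b :: int) dvd 1" by (simp add: is_unit_power_iff)
  ultimately have "int p ^ e dvd 1" by (rule dvd_trans)
  moreover have "1 < int p ^ e" using assms by (intro one_less_power) auto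
  ultimately show False by (simp add: zdvd1_eq)
qed

lemma nu_p_minus_power:
  assumes "p > 1"
  shows "nu_p p (- of_nat (p ^ k)) = ereal (real k)"
proof (rule order.antisym)
  show "ereal (real k) \<le> nu_p p (- of_nat (p ^ k))"
    using nu_p_of_int_ge[OF assms, of k "-1"] by simp
  show "nu_p p (- of_nat (p ^ k)) \<le> ereal (real k)"
    unfolding nu_p_def
  proof (rule Sup_least)
    fix x assume "x \<in> {ereal (real a / real b) | a b. b > 0 \<and>
        algebraic_int ((- of_nat (p ^ k) :: complex) ^ b / of_nat p ^ a)}"
    then obtain a b where ab: "x = ereal (real a / real b)" "b > 0"
      and alg: "algebraic_int ((- of_nat (p ^ k) :: complex) ^ b / of_nat p ^ a)" by blast
    have "a \<le> k * b"
    proof (rule ccontr)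
      assume "\<not> a \<le> k * b"
      define e where "e = a - k * b"
      have e: "a = k * b + e" "e > 0" using \<open>\<not> a \<le> k * b\<close> unfolding e_def by linarith+
      have "(- of_nat (p ^ k) :: complex) ^ b = (-1) ^ b * (of_nat p ^ k) ^ b"
        by (subst power_minus) (simp only: of_nat_power)
      also have "\<dots> = (-1) ^ b * of_nat p ^ (k * b)" by (simp only: power_mult)
      finally have "(- of_nat (p ^ k) :: complex) ^ b = (-1) ^ b * of_nat p ^ (k * b)" .
      moreover have "(of_nat p :: complex) ^ a = of_nat p ^ (k * b) * of_nat p ^ e"
        by (simp only: e(1) power_add)
      ultimately have "(- of_nat (p ^ k) :: complex) ^ b / of_nat p ^ a = (-1) ^ b / of_nat p ^ e"
        using assms by simp
      thus False using alg not_algebraic_int_sign_div_power[OF assms e(2)] by simp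
    qed
    hence "real a \<le> real k * real b" by (metis of_nat_le_iff of_nat_mult)
    thus "x \<le> ereal (real k)" using ab by (simp add: divide_le_eq)
  qed
qed

section \<open>The canonical additive character\<close>

definition zeta :: "nat \<Rightarrow> complex" where
  "zeta p = exp (2 * complex_of_real pi * \<i> / of_nat p)"

lemma zeta_power_eq_1_iff:
  assumes "p > 0"
  shows "zeta p ^ k = 1 \<longleftrightarrow> p dvd k"
proof
  assume "zeta p ^ k = 1"
  moreover have "zeta p ^ k = exp (of_nat k * (2 * complex_of_real pi * \<i> / of_nat p))"
    unfolding zeta_def by (rule exp_of_nat_mult[symmetric])
  ultimately have "exp (of_nat k * (2 * complex_of_real pi * \<i> / of_nat p)) = 1" by simp
  then obtain z :: int where "real k * (2 * pi) / real p = 2 * real_of_int z * pi"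
    unfolding exp_eq_1 by simp blast
  hence "real k = real p * of_int z" using assms by (simp add: field_simps)
  hence "int k = int p * z" by (metis of_int_eq_iff of_int_mult of_int_of_nat_eq)
  hence "int p dvd int k" by (rule dvdI)
  thus "p dvd k" by simp
next
  assume "p dvd k"
  then obtain z where z: "k = p * z" by blast
  have "zeta p ^ p = 1"
    unfolding zeta_def using assms by (simp add: exp_of_nat_mult[symmetric])
  thus "zeta p ^ k = 1" unfolding z power_mult by simp
qed

lemma zeta_power_mod:
  assumes "p > 0"
  shows "zeta p ^ k = zeta p ^ (k mod p)"
proof -
  have "zeta p ^ k = zeta p ^ (p * (k div p) + k mod p)" by simp
  also have "\<dots> = (zeta p ^ p) ^ (k div p) * zeta p ^ (k mod p)"
    by (simp only: power_add power_mult)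
  also have "zeta p ^ p = 1" using zeta_power_eq_1_iff[OF assms] by simp
  finally show ?thesis by simp
qed

lemma zeta_power_cong:
  assumes "p > 0" "[k = l] (mod p)"
  shows "zeta p ^ k = zeta p ^ l"
  using assms zeta_power_mod unfolding cong_def by metis

context
  fixes m :: nat
  assumes card_UNIV: "card (UNIV::'a::{field,finite} set) = CHAR('a) ^ m"
begin

lemma abs_trace_eq: "abs_trace (x::'a) = (\<Sum>i<m. x ^ (CHAR('a) ^ i))"
proof -
  have "fp_degree TYPE('a) = m"
    unfolding fp_degree_def
  proof (rule the_equality)
    fix m' assume "card (UNIV::'a set) = CHAR('a) ^ m'"
    moreover have "1 < CHAR('a)" using prime_CHAR_finite_field prime_gt_1_nat by blast
    ultimately show "m' = m" using card_UNIV power_inject_exp by metis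
  qed (rule card_UNIV)
  thus ?thesis unfolding abs_trace_def by simp
qed

lemma degree_pos: "m > 0"
  using card_subfield_ge_2[OF subfield_UNIV, where 'a='a] card_UNIV by (cases m) auto

lemma abs_trace_add: "abs_trace ((x::'a) + y) = abs_trace x + abs_trace y"
  unfolding abs_trace_eq
  by (simp add: freshmans_dream'[OF prime_CHAR_finite_field refl] sum.distrib)

lemma abs_trace_power_CHAR: "abs_trace ((x::'a) ^ CHAR('a)) = abs_trace x ^ CHAR('a)"
  unfolding abs_trace_eq freshmans_dream_sum[OF prime_CHAR_finite_field refl]
  by (simp add: power_mult[symmetric] mult.commute)

lemma abs_trace_power_CHAR_eq: "abs_trace (x::'a) ^ CHAR('a) = abs_trace x"
proof -
  define f where "f i = x ^ (CHAR('a) ^ i)" for i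
  have "f m = f 0"
    unfolding f_def card_UNIV[symmetric] by (simp add: subfield_power_card[OF subfield_UNIV])
  hence shift: "(\<Sum>i<m. f (Suc i)) = (\<Sum>i<m. f i)"
    using sum.lessThan_Suc_shift[of f m] by (simp add: add.commute)
  have "abs_trace x ^ CHAR('a) = abs_trace (x ^ CHAR('a))"
    by (rule abs_trace_power_CHAR[symmetric])
  also have "\<dots> = (\<Sum>i<m. f (Suc i))"
    unfolding abs_trace_eq f_def by (simp add: power_mult[symmetric] mult.commute)
  finally have "abs_trace x ^ CHAR('a) = (\<Sum>i<m. f i)" unfolding shift .
  thus ?thesis unfolding f_def abs_trace_eq[symmetric] .
qed

lemma abs_trace_frobenius: "abs_trace ((x::'a) ^ (CHAR('a) ^ k)) = abs_trace x"
proof (induction k)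
  case (Suc k)
  have "x ^ (CHAR('a) ^ Suc k) = (x ^ (CHAR('a) ^ k)) ^ CHAR('a)"
    by (simp add: power_mult[symmetric] mult.commute)
  hence "abs_trace (x ^ (CHAR('a) ^ Suc k)) = abs_trace (x ^ (CHAR('a) ^ k)) ^ CHAR('a)"
    by (simp only: abs_trace_power_CHAR)
  thus ?case unfolding abs_trace_power_CHAR_eq Suc.IH .
qed simp

lemma abs_trace_nonzero:
  obtains x :: 'a where "abs_trace x \<noteq> 0"
proof -
  define p where "p = CHAR('a)"
  have p: "p \<ge> 2" using prime_CHAR_finite_field prime_ge_2_nat p_def by blast
  obtain m' where m': "m = Suc m'" using degree_pos by (cases m) auto
  define P where "P = monom (1::'a) (p ^ m') + (\<Sum>i<m'. monom 1 (p ^ i))"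
  have "degree (monom (1::'a) (p ^ i)) < p ^ m'" if "i < m'" for i
    using that p by (simp add: degree_monom_eq power_strict_increasing)
  hence "degree (\<Sum>i<m'. monom (1::'a) (p ^ i)) < p ^ m'"
    using p by (intro degree_sum_less) auto
  hence deg: "degree P = p ^ m'"
    unfolding P_def by (subst degree_add_eq_left) (auto simp: degree_monom_eq)
  hence "P \<noteq> 0" using p by (intro notI) simp
  have "card {x. poly P x = 0} \<le> p ^ m'"
    using card_poly_roots_bound[OF \<open>P \<noteq> 0\<close>] deg by simp
  also have "\<dots> < p ^ m" using p m' by simp
  also have "\<dots> = card (UNIV :: 'a set)" using card_UNIV p_def by simp
  finally have "card {x. poly P x = 0} < card (UNIV :: 'a set)" .
  hence "{x. poly P x = 0} \<noteq> UNIV" by auto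
  then obtain x where "poly P x \<noteq> 0" by auto
  moreover have "poly P x = abs_trace x"
    unfolding P_def abs_trace_eq m' p_def by (simp add: poly_sum poly_monom add.commute)
  ultimately show ?thesis using that by simp
qed

lemma psi_eq_zeta_power:
  assumes "of_nat k = abs_trace (x::'a)"
  shows "psi x = zeta CHAR('a) ^ k"
proof -
  have p: "CHAR('a) > 0" using prime_CHAR_finite_field prime_gt_0_nat by blast
  obtain k0 where k0: "k0 < CHAR('a)" "of_nat k0 = abs_trace x"
    using power_CHAR_eq_self_iff[of "abs_trace x"] abs_trace_power_CHAR_eq[of x] by auto
  have the_k0: "(THE k. k < CHAR('a) \<and> of_nat k = abs_trace x) = k0"
  proof (rule the_equality)
    fix k' assume k': "k' < CHAR('a) \<and> of_nat k' = abs_trace x"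
    hence "of_nat k' = (of_nat k0 :: 'a)" using k0 by simp
    hence "[k' = k0] (mod CHAR('a))" by (simp only: of_nat_eq_iff_cong_CHAR)
    thus "k' = k0" using k' k0(1) by (blast intro: cong_less_modulus_unique_nat)
  qed (use k0 in simp)
  have "of_nat k0 = (of_nat k :: 'a)" using k0(2) assms by simp
  hence cong: "[k0 = k] (mod CHAR('a))" by (simp only: of_nat_eq_iff_cong_CHAR)
  have "psi x = exp (2 * complex_of_real pi * \<i> * of_nat k0 / of_nat CHAR('a))"
    unfolding psi_def the_k0 ..
  also have "\<dots> = exp (of_nat k0 * (2 * complex_of_real pi * \<i> / of_nat CHAR('a)))"
    by (metis mult.commute times_divide_eq_right)
  also have "\<dots> = zeta CHAR('a) ^ k0"
    unfolding zeta_def by (rule exp_of_nat_mult)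
  also have "\<dots> = zeta CHAR('a) ^ k"
    using p cong by (rule zeta_power_cong)
  finally show ?thesis .
qed

lemma psi_exists_zeta_power:
  obtains k where "psi (x::'a) = zeta CHAR('a) ^ k" "of_nat k = abs_trace x"
proof -
  obtain k where "of_nat k = abs_trace x"
    using power_CHAR_eq_self_iff[of "abs_trace x"] abs_trace_power_CHAR_eq[of x] by auto
  thus ?thesis using that psi_eq_zeta_power by blast
qed

lemma psi_add: "psi ((x::'a) + y) = psi x * psi y"
proof -
  obtain k where k: "psi x = zeta CHAR('a) ^ k" "of_nat k = abs_trace x"
    by (rule psi_exists_zeta_power)
  obtain l where l: "psi y = zeta CHAR('a) ^ l" "of_nat l = abs_trace y"
    by (rule psi_exists_zeta_power)
  show ?thesis using k l using psi_eq_zeta_power[of "k + l" "x + y"] by (simp add: abs_trace_add power_add)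
qed

lemma psi_0: "psi (0::'a) = 1"
proof -
  have "abs_trace (0::'a) = 0" using abs_trace_add[of 0 0] by (simp only: add_0 add_cancel_right_right)
  thus ?thesis using psi_eq_zeta_power[of 0 0] by simp
qed

lemma psi_frobenius: "psi ((x::'a) ^ (CHAR('a) ^ k)) = psi x"
proof -
  obtain l where l: "psi x = zeta CHAR('a) ^ l" "of_nat l = abs_trace x"
    by (rule psi_exists_zeta_power)
  hence "of_nat l = abs_trace (x ^ (CHAR('a) ^ k))" by (simp only: abs_trace_frobenius)
  thus ?thesis using l(1) by (simp only: psi_eq_zeta_power)
qed

lemma psi_nonzero: "psi (x::'a) \<noteq> 0"
  using psi_add[of "- x" x] psi_0 by auto

lemma psi_nontrivial:
  obtains z :: 'a where "psi z \<noteq> 1"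
proof -
  have p: "CHAR('a) > 0" using prime_CHAR_finite_field prime_gt_0_nat by blast
  obtain x :: 'a where x: "abs_trace x \<noteq> 0" using abs_trace_nonzero by blast
  obtain k where k: "psi x = zeta CHAR('a) ^ k" "of_nat k = abs_trace x"
    by (rule psi_exists_zeta_power)
  have "\<not> CHAR('a) dvd k"
  proof
    assume "CHAR('a) dvd k"
    hence "(of_nat k :: 'a) = 0" by (simp only: of_nat_eq_0_iff_char_dvd)
    thus False using k(2) x by simp
  qed
  hence "psi x \<noteq> 1" using k(1) zeta_power_eq_1_iff[OF p] by simp
  thus ?thesis using that by blast
qed

lemma sum_psi_additive:
  fixes A :: "'a set" and h :: "'a \<Rightarrow> 'a"
  assumes add: "\<And>x y. x \<in> A \<Longrightarrow> y \<in> A \<Longrightarrow> x + y \<in> A"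
    and diff: "\<And>x y. x \<in> A \<Longrightarrow> y \<in> A \<Longrightarrow> x - y \<in> A"
    and h_add: "\<And>x y. x \<in> A \<Longrightarrow> y \<in> A \<Longrightarrow> h (x + y) = h x + h y"
  shows "(\<Sum>c\<in>A. psi (h c)) = (if \<forall>c\<in>A. psi (h c) = 1 then of_nat (card A) else 0)"
proof (cases "\<forall>c\<in>A. psi (h c) = 1")
  case False
  then obtain c0 where c0: "c0 \<in> A" "psi (h c0) \<noteq> 1" by blast
  have "(\<Sum>c\<in>A. psi (h c)) = (\<Sum>c\<in>A. psi (h (c + c0)))"
    by (rule sum.reindex_bij_witness[of A "\<lambda>c. c + c0" "\<lambda>c. c - c0"]) (use c0 add diff in auto)
  also have "\<dots> = (\<Sum>c\<in>A. psi (h c)) * psi (h c0)"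
    unfolding sum_distrib_right by (rule sum.cong) (use c0 h_add psi_add in auto)
  finally have "(\<Sum>c\<in>A. psi (h c)) * (1 - psi (h c0)) = 0" by (simp add: algebra_simps)
  hence "(\<Sum>c\<in>A. psi (h c)) = 0" using c0 by simp
  thus ?thesis using False by (simp only: if_False)
qed simp

lemma psi_mult_trivial_iff: "(\<forall>a. psi (a * y) = 1) \<longleftrightarrow> (y::'a) = 0"
proof
  assume all: "\<forall>a. psi (a * y) = 1"
  obtain z :: 'a where "psi z \<noteq> 1" by (rule psi_nontrivial)
  moreover have "psi ((z / y) * y) = 1" using all by blast
  ultimately show "y = 0" by (cases "y = 0") simp_all
qed (simp add: psi_0)

lemma sum_psi_mult:
  "(\<Sum>a\<in>UNIV. psi (a * y)) = (if (y::'a) = 0 then of_nat (card (UNIV::'a set)) else 0)"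
proof -
  have "(\<Sum>a\<in>UNIV. psi (a * y)) =
      (if \<forall>a\<in>UNIV. psi (a * y) = 1 then of_nat (card (UNIV::'a set)) else 0)"
    by (rule sum_psi_additive) (auto simp: distrib_right)
  thus ?thesis by (simp add: psi_mult_trivial_iff)
qed

lemma psi_diff_eq_1:
  assumes "psi (x::'a) = psi y"
  shows "psi (x - y) = 1"
proof -
  have "psi (x - y) * psi y = 1 * psi y" using psi_add[of "x - y" y] assms by simp
  thus ?thesis using psi_nonzero[of y] by simp
qed

lemma additive_if_psi_mult_eq_1:
  fixes F :: "'a \<Rightarrow> 'a"
  assumes "a \<noteq> 0" and F_mult: "\<And>x y. F (x * y) = F x * F y" and "surj F"
    and link: "\<And>y. psi y * psi (a * F y) = 1"
  shows "F (y + z) = F y + F z"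
proof -
  have F_add_psi: "psi (a * F (y + z)) = psi (a * (F y + F z))" for y z
  proof -
    have "psi (a * F (y + z)) * (psi y * psi z) = 1"
      using link[of "y + z"] by (simp add: psi_add mult_ac)
    moreover have "psi (a * (F y + F z)) * (psi y * psi z) = 1"
      using link[of y] link[of z] by (simp add: distrib_left psi_add mult_ac)
    moreover have "psi y * psi z \<noteq> 0" by (simp add: psi_nonzero)
    ultimately show ?thesis by (metis mult_right_cancel)
  qed
  define D where "D = F (y + z) - F y - F z"
  have psi_D: "psi (a * w * D) = 1" for w
  proof -
    obtain t where t: "F t = w" using \<open>surj F\<close> by (metis surjD)
    have "psi (a * F (t * (y + z))) = psi (a * (F (t * y) + F (t * z)))"
      using F_add_psi[of "t * y" "t * z"] by (simp only: distrib_left)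
    hence "psi (a * (w * F (y + z))) = psi (a * (w * F y + w * F z))"
      by (simp only: F_mult t)
    hence "psi (a * (w * F (y + z)) - a * (w * F y + w * F z)) = 1"
      by (rule psi_diff_eq_1)
    thus ?thesis unfolding D_def by (simp add: algebra_simps)
  qed
  have "\<forall>w. psi (w * (a * D)) = 1" using psi_D by (simp add: mult_ac)
  hence "D = 0" using \<open>a \<noteq> 0\<close> by (simp add: psi_mult_trivial_iff)
  hence "F (y + z) - (F y + F z) = 0" unfolding D_def by (simp only: diff_diff_eq)
  thus ?thesis by (simp only: right_minus_eq)
qed

end

section \<open>Weil sums of an invertible exponent\<close>

context
  fixes m :: nat and d :: int
  assumes card_UNIV: "card (UNIV::'a::{field,finite} set) = CHAR('a) ^ m"
    and coprime: "gcd d (int (card (UNIV::'a set)) - 1) = 1"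
    and d_nonzero: "d \<noteq> 0" \<comment> \<open>only needed because \<open>0 powi 0 = 1\<close>\<close>
begin

lemma power_int_inverse_exponent:
  obtains u :: int where "\<And>x::'a. (x powi d) powi u = x" "\<And>x::'a. (x powi u) powi d = x"
proof -
  define N where "N = card (UNIV::'a set) - 1"
  have N: "int N = int (card (UNIV::'a set)) - 1" "N > 0"
    using card_subfield_ge_2[OF subfield_UNIV, where 'a='a] unfolding N_def by auto
  obtain u0 where u0: "[d * u0 = 1] (mod int N)"
    using cong_solve_int[of d "int N"] coprime N(1) by auto
  define u where "u = u0 mod int N + int N"
  have "[u = u0] (mod int N)" unfolding u_def cong_def by simp
  hence "[d * u = d * u0] (mod int N)" by (rule cong_scalar_left)
  hence cong: "[d * u = 1] (mod int N)" using u0 by (rule cong_trans)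
  have "0 \<le> u0 mod int N" using N(2) by simp
  hence "u > 0" using N(2) unfolding u_def by linarith
  have du: "x powi (d * u) = x" for x :: 'a
  proof (cases "x = 0")
    case False
    have "x ^ N = 1" unfolding N_def by (rule subfield_power_card_minus_1[OF subfield_UNIV]) (use False in auto)
    thus ?thesis using power_int_cong[OF False _ cong] by simp
  qed (use \<open>u > 0\<close> d_nonzero in simp)
  show ?thesis
    by (rule that[of u]) (use du in \<open>simp_all add: power_int_mult[symmetric] mult.commute\<close>)
qed

lemma bij_power_int: "bij (\<lambda>x::'a. x powi d)"
proof -
  obtain u where "\<And>x::'a. (x powi d) powi u = x" "\<And>x::'a. (x powi u) powi d = x"
    using power_int_inverse_exponent by blast
  thus ?thesis by (intro bij_betw_byWitness[of _ "\<lambda>y. y powi u"]) auto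
qed

lemma power_int_uminus: "(- x :: 'a) powi d = - (x powi d)"
proof (cases "CHAR('a) = 2")
  case True
  thus ?thesis by (simp add: uminus_CHAR_2)
next
  case False
  hence "odd CHAR('a)"
    using prime_CHAR_finite_field prime_ge_2_nat prime_odd_nat by (metis le_neq_implies_less)
  hence even: "even (int (card (UNIV::'a set)) - 1)" unfolding card_UNIV by simp
  have "odd d"
  proof
    assume "even d"
    hence "2 dvd gcd d (int (card (UNIV::'a set)) - 1)" using even by simp
    thus False using coprime by simp
  qed
  thus ?thesis by simp
qed

lemma weil_sum_0: "weil_sum d (0::'a) = 0"
proof -
  have "weil_sum d (0::'a) = (\<Sum>x\<in>UNIV. psi ((x::'a) powi d))" unfolding weil_sum_def by simp
  also have "\<dots> = (\<Sum>y\<in>UNIV. psi (y::'a))"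
    by (rule sum.reindex_bij_betw[OF bij_power_int])
  also have "\<dots> = 0" using sum_psi_mult[OF card_UNIV, of 1] by simp
  finally show ?thesis .
qed

lemma sum_weil_sum: "(\<Sum>a\<in>UNIV. weil_sum d (a::'a)) = of_nat (card (UNIV::'a set))"
proof -
  have "(\<Sum>a\<in>UNIV. weil_sum d (a::'a)) = (\<Sum>a\<in>UNIV. \<Sum>x\<in>UNIV. psi ((x::'a) powi d) * psi (a * x))"
    unfolding weil_sum_def by (simp add: psi_add[OF card_UNIV])
  also have "\<dots> = (\<Sum>x\<in>UNIV. \<Sum>a\<in>UNIV. psi ((x::'a) powi d) * psi (a * x))"
    by (rule sum.swap)
  also have "\<dots> = (\<Sum>x\<in>UNIV. psi ((x::'a) powi d) * (\<Sum>a\<in>UNIV. psi (a * x)))"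
    by (simp add: sum_distrib_left)
  also have "\<dots> = (\<Sum>x\<in>UNIV. if (x::'a) = 0 then of_nat (card (UNIV::'a set)) else 0)"
    by (rule sum.cong) (use d_nonzero in \<open>simp_all add: sum_psi_mult[OF card_UNIV] psi_0[OF card_UNIV]\<close>)
  finally show ?thesis by simp
qed

lemma sum_weil_sum_squared:
  "(\<Sum>a\<in>UNIV. weil_sum d (a::'a) * weil_sum d a) = of_nat (card (UNIV::'a set)) ^ 2"
proof -
  have prod: "weil_sum d a * weil_sum d a =
      (\<Sum>x\<in>UNIV. \<Sum>y\<in>UNIV. psi (x powi d + y powi d) * psi (a * (x + y)))" for a :: 'a
    unfolding weil_sum_def sum_product
    by (intro sum.cong refl) (simp add: psi_add[OF card_UNIV, symmetric] algebra_simps)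
  have inner: "psi (x powi d + y powi d) * (\<Sum>a\<in>UNIV. psi (a * (x + y))) =
      (if y = - x then of_nat (card (UNIV::'a set)) else 0)" for x y :: 'a
  proof (cases "y = - x")
    case True
    thus ?thesis by (simp add: power_int_uminus sum_psi_mult[OF card_UNIV] psi_0[OF card_UNIV])
  next
    case False
    hence "x + y \<noteq> 0" by (metis add.commute neg_eq_iff_add_eq_0)
    hence "(\<Sum>a\<in>UNIV. psi (a * (x + y))) = 0"
      using sum_psi_mult[OF card_UNIV, of "x + y"] by (simp only: if_False)
    thus ?thesis using False by simp
  qed
  have "(\<Sum>a\<in>UNIV. weil_sum d (a::'a) * weil_sum d a) =
      (\<Sum>x\<in>UNIV. \<Sum>y\<in>UNIV. psi ((x::'a) powi d + y powi d) * (\<Sum>a\<in>UNIV. psi (a * (x + y))))"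
    unfolding prod by (subst sum.swap, rule sum.cong[OF refl], subst sum.swap) (simp add: sum_distrib_left)
  also have "\<dots> = (\<Sum>x::'a\<in>UNIV. of_nat (card (UNIV::'a set)) :: complex)"
    unfolding inner by simp
  finally show ?thesis by (simp add: power2_eq_square)
qed

end

section \<open>Exponents degenerate over the subfield of index 2\<close>

locale quadratic_subfield =
  fixes K :: "'a::{field,finite} set" and n :: nat
  assumes subfield: "is_subfield K"
    and card_UNIV_eq_square: "card (UNIV::'a set) = card K ^ 2"
    and card_K: "card K = CHAR('a) ^ n"
begin

lemma card_UNIV: "card (UNIV::'a set) = CHAR('a) ^ (2 * n)"
  using card_UNIV_eq_square card_K by (simp add: power_mult[symmetric] mult.commute)

lemma card_K_ge_2: "2 \<le> card K"
  using card_subfield_ge_2[OF subfield] by simp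

lemma mem_K_iff: "x \<in> K \<longleftrightarrow> x ^ card K = x"
  using subfield_iff_power_card[OF subfield] by simp

lemma power_card_K_twice: "((x::'a) ^ card K) ^ card K = x"
  using subfield_power_card[OF subfield_UNIV, of x] card_UNIV_eq_square
  by (simp add: power_mult[symmetric] power2_eq_square)

lemma power_card_K_add: "((x::'a) + y) ^ card K = x ^ card K + y ^ card K"
  by (rule freshmans_dream'[OF prime_CHAR_finite_field card_K])

lemma K_ne_UNIV: "K \<noteq> UNIV"
proof
  assume "K = UNIV"
  hence "card K = card K * card K" using card_UNIV_eq_square by (simp add: power2_eq_square)
  thus False using card_K_ge_2 by simp
qed

lemma quadratic_basis:
  assumes "\<theta> \<notin> K"
  obtains c\<^sub>1 c\<^sub>2 where "c\<^sub>1 \<in> K" "c\<^sub>2 \<in> K" "x = c\<^sub>1 + c\<^sub>2 * \<theta>"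
proof -
  define \<phi> where "\<phi> = (\<lambda>(c\<^sub>1, c\<^sub>2). c\<^sub>1 + c\<^sub>2 * \<theta>)"
  have "inj_on \<phi> (K \<times> K)"
  proof (rule inj_onI, clarify)
    fix c\<^sub>1 c\<^sub>2 e\<^sub>1 e\<^sub>2
    assume K: "c\<^sub>1 \<in> K" "c\<^sub>2 \<in> K" "e\<^sub>1 \<in> K" "e\<^sub>2 \<in> K" and eq: "\<phi> (c\<^sub>1, c\<^sub>2) = \<phi> (e\<^sub>1, e\<^sub>2)"
    have "c\<^sub>2 = e\<^sub>2"
    proof (rule ccontr)
      assume "c\<^sub>2 \<noteq> e\<^sub>2"
      hence "\<theta> = (e\<^sub>1 - c\<^sub>1) / (c\<^sub>2 - e\<^sub>2)" using eq unfolding \<phi>_def by (simp add: field_simps)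
      thus False using assms K by (simp add: subfield_diff[OF subfield] subfield_divide[OF subfield])
    qed
    thus "c\<^sub>1 = e\<^sub>1 \<and> c\<^sub>2 = e\<^sub>2" using eq unfolding \<phi>_def by simp
  qed
  hence "card (\<phi> ` (K \<times> K)) = card (UNIV::'a set)"
    using card_UNIV_eq_square by (simp add: card_image card_cartesian_product power2_eq_square)
  hence "\<phi> ` (K \<times> K) = UNIV" by (simp add: card_eq_UNIV_imp_eq_UNIV)
  hence "x \<in> \<phi> ` (K \<times> K)" by simp
  thus ?thesis using that unfolding \<phi>_def by auto
qed

lemma hom_fixing_K_cases:
  assumes add: "\<And>x y. \<tau> (x + y) = \<tau> x + \<tau> y" and mult: "\<And>x y. \<tau> (x * y) = \<tau> x * \<tau> y"
    and fix_K: "\<And>c. c \<in> K \<Longrightarrow> \<tau> c = c"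
  shows "(\<forall>x. \<tau> x = x) \<or> (\<forall>x. \<tau> x = x ^ card K)"
proof -
  obtain \<theta> where \<theta>: "\<theta> \<notin> K" using K_ne_UNIV by blast
  define s where "s = \<theta> + \<theta> ^ card K"
  define t where "t = \<theta> * \<theta> ^ card K"
  have "s \<in> K" unfolding mem_K_iff s_def power_card_K_add power_card_K_twice by (simp add: add.commute)
  moreover have "t \<in> K" unfolding mem_K_iff t_def power_mult_distrib power_card_K_twice by (simp add: mult.commute)
  moreover have "\<theta> * \<theta> + t = s * \<theta>" unfolding s_def t_def by (simp add: algebra_simps)
  hence "\<tau> \<theta> * \<tau> \<theta> + \<tau> t = \<tau> s * \<tau> \<theta>" by (metis add mult)
  ultimately have "\<tau> \<theta> * \<tau> \<theta> + t = s * \<tau> \<theta>" using fix_K by simp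
  hence "(\<tau> \<theta> - \<theta>) * (\<tau> \<theta> - \<theta> ^ card K) = 0" unfolding s_def t_def by (simp add: algebra_simps)
  hence \<tau>\<theta>: "\<tau> \<theta> = \<theta> \<or> \<tau> \<theta> = \<theta> ^ card K" by simp
  have \<tau>_basis: "\<tau> x = c\<^sub>1 + c\<^sub>2 * \<tau> \<theta>" if "c\<^sub>1 \<in> K" "c\<^sub>2 \<in> K" "x = c\<^sub>1 + c\<^sub>2 * \<theta>" for x c\<^sub>1 c\<^sub>2
    using that by (simp add: add mult fix_K)
  have power_basis: "x ^ card K = c\<^sub>1 + c\<^sub>2 * \<theta> ^ card K" if "c\<^sub>1 \<in> K" "c\<^sub>2 \<in> K" "x = c\<^sub>1 + c\<^sub>2 * \<theta>" for x c\<^sub>1 c\<^sub>2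
    using that mem_K_iff by (simp add: power_card_K_add power_mult_distrib)
  from \<tau>\<theta> show ?thesis
    by (metis quadratic_basis[OF \<theta>] \<tau>_basis power_basis)
qed

end

locale degenerate_exponent = quadratic_subfield K n for K :: "'a::{field,finite} set" and n +
  fixes d :: int and j :: nat
  assumes coprime: "gcd d (int (card (UNIV::'a set)) - 1) = 1"
    and cong_K: "[d = int CHAR('a) ^ j] (mod int (card K) - 1)"
begin

lemma d_nonzero: "d \<noteq> 0"
proof
  assume "d = 0"
  hence "int (card (UNIV::'a set)) - 1 = 1" using coprime by simp
  moreover have "card K * card K \<ge> 2 * 2" using card_K_ge_2 by (intro mult_mono) auto
  hence "card (UNIV::'a set) \<ge> 4" using card_UNIV_eq_square by (simp add: power2_eq_square)
  ultimately show False by linarith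
qed

lemma power_int_on_K:
  assumes "c \<in> K"
  shows "c powi d = c ^ (CHAR('a) ^ j)"
proof (cases "c = 0")
  case True
  thus ?thesis using d_nonzero prime_gt_0_nat[OF prime_CHAR_finite_field[where 'a='a]] by simp
next
  case False
  have "c ^ (card K - 1) = 1" by (rule subfield_power_card_minus_1[OF subfield _ assms False]) simp
  moreover have "[d = int (CHAR('a) ^ j)] (mod int (card K - 1))"
    using cong_K card_K_ge_2 by (simp add: of_nat_diff)
  ultimately have "c powi d = c powi int (CHAR('a) ^ j)" by (rule power_int_cong[OF False])
  thus ?thesis by (simp only: power_int_of_nat)
qed

lemma zero_power_frobenius: "(0::'a) ^ (CHAR('a) ^ j) = 0"
  using prime_gt_0_nat[OF prime_CHAR_finite_field[where 'a='a]] by simp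

text \<open>Replacing \<open>a x\<close> by its Frobenius conjugate leaves \<open>psi\<close> unchanged and makes the argument
  of the Weil sum semilinear over \<open>K\<close>, see \<open>weil_arg_scale\<close>.\<close>

definition weil_arg :: "'a \<Rightarrow> 'a \<Rightarrow> 'a" where
  "weil_arg a x = x powi d + (a * x) ^ (CHAR('a) ^ j)"

definition K_trivial :: "'a \<Rightarrow> 'a \<Rightarrow> bool" where
  "K_trivial a x \<longleftrightarrow> (\<forall>c\<in>K. psi (c ^ (CHAR('a) ^ j) * weil_arg a x) = 1)"

definition K_trivial_set :: "'a \<Rightarrow> 'a set" where
  "K_trivial_set a = {x. x \<noteq> 0 \<and> K_trivial a x}"

definition orbit_count :: "'a \<Rightarrow> nat" where
  "orbit_count a = card (K_trivial_set a) div (card K - 1)"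

lemma weil_arg_scale:
  assumes "c \<in> K"
  shows "weil_arg a (c * x) = c ^ (CHAR('a) ^ j) * weil_arg a x"
  using power_int_on_K[OF assms]
  by (simp add: weil_arg_def power_int_mult_distrib power_mult_distrib algebra_simps)

lemma weil_sum_eq_sum_weil_arg:
  assumes "c \<in> K" "c \<noteq> 0"
  shows "weil_sum d a = (\<Sum>x\<in>UNIV. psi (c ^ (CHAR('a) ^ j) * weil_arg a x))"
proof -
  have "weil_sum d a = (\<Sum>x\<in>UNIV. psi ((c * x) powi d + a * (c * x)))"
    unfolding weil_sum_def
    by (rule sum.reindex_bij_witness[of _ "\<lambda>x. c * x" "\<lambda>x. x / c"]) (use assms in auto)
  also have "\<dots> = (\<Sum>x\<in>UNIV. psi (weil_arg a (c * x)))"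
    unfolding weil_arg_def
    by (simp add: psi_add[OF card_UNIV] psi_frobenius[OF card_UNIV])
  finally show ?thesis by (simp add: weil_arg_scale[OF assms(1)])
qed

lemma sum_psi_K:
  "(\<Sum>c\<in>K. psi (c ^ (CHAR('a) ^ j) * y)) =
     (if \<forall>c\<in>K. psi (c ^ (CHAR('a) ^ j) * y) = 1 then of_nat (card K) else 0)"
  by (rule sum_psi_additive[OF card_UNIV])
     (auto simp: subfield_add[OF subfield] subfield_diff[OF subfield] distrib_right
        freshmans_dream'[OF prime_CHAR_finite_field refl])

lemma K_trivial_0: "K_trivial a 0"
  unfolding K_trivial_def weil_arg_def
  using d_nonzero by (simp add: zero_power_frobenius psi_0[OF card_UNIV])

lemma weil_sum_count:
  "of_nat (card K - 1) * weil_sum d a =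
     of_nat (card K) * of_nat (card (K_trivial_set a) + 1) - of_nat (card (UNIV::'a set))"
proof -
  have inner: "(\<Sum>c\<in>K-{0}. psi (c ^ (CHAR('a) ^ j) * weil_arg a x)) =
      (if K_trivial a x then of_nat (card K) else 0) - 1" for x
  proof -
    have "(\<Sum>c\<in>K-{0}. psi (c ^ (CHAR('a) ^ j) * weil_arg a x)) =
        (\<Sum>c\<in>K. psi (c ^ (CHAR('a) ^ j) * weil_arg a x)) - psi (0 ^ (CHAR('a) ^ j) * weil_arg a x)"
      using subfield_0[OF subfield] by (simp add: sum_diff1)
    thus ?thesis unfolding sum_psi_K K_trivial_def
      by (simp add: zero_power_frobenius psi_0[OF card_UNIV])
  qed
  have "{x. K_trivial a x} = insert 0 (K_trivial_set a)"
    unfolding K_trivial_set_def using K_trivial_0 by auto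
  hence card: "card {x. K_trivial a x} = card (K_trivial_set a) + 1"
    by (simp add: K_trivial_set_def)
  have "of_nat (card K - 1) * weil_sum d a = (\<Sum>c\<in>K-{0}. weil_sum d a)"
    using subfield_0[OF subfield] by simp
  also have "\<dots> = (\<Sum>c\<in>K-{0}. \<Sum>x\<in>UNIV. psi (c ^ (CHAR('a) ^ j) * weil_arg a x))"
    by (rule sum.cong) (simp_all add: weil_sum_eq_sum_weil_arg)
  also have "\<dots> = (\<Sum>x\<in>UNIV. \<Sum>c\<in>K-{0}. psi (c ^ (CHAR('a) ^ j) * weil_arg a x))"
    by (rule sum.swap)
  also have "\<dots> = (\<Sum>x\<in>UNIV. (if K_trivial a x then of_nat (card K) else 0) - 1)"
    unfolding inner ..
  also have "\<dots> = of_nat (card K) * of_nat (card {x. K_trivial a x}) - of_nat (card (UNIV::'a set))"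
    by (simp add: sum_subtractf sum.If_cases)
  finally show ?thesis unfolding card .
qed

lemma card_K_minus_1_dvd: "card K - 1 dvd card (K_trivial_set a)"
proof -
  have "card (K - {0}) dvd card (K_trivial_set a)"
  proof (rule card_dvd_card_if_mult_stable)
    show "finite (K_trivial_set a)" "0 \<notin> K_trivial_set a" "1 \<in> K - {0}"
      using subfield_1[OF subfield] by (auto simp: K_trivial_set_def)
    show "x * y \<in> K - {0}" if "x \<in> K - {0}" "y \<in> K - {0}" for x y
      using that subfield_mult[OF subfield] by auto
    show "inverse x \<in> K - {0}" if "x \<in> K - {0}" for x
      using that subfield_inverse[OF subfield] by auto
    show "c * x \<in> K_trivial_set a" if x: "x \<in> K_trivial_set a" and c: "c \<in> K - {0}" for x c
    proof -
      have "psi (e ^ (CHAR('a) ^ j) * weil_arg a (c * x)) = 1" if "e \<in> K" for e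
      proof -
        have "e * c \<in> K" using that c subfield_mult[OF subfield] by auto
        hence "psi ((e * c) ^ (CHAR('a) ^ j) * weil_arg a x) = 1"
          using x unfolding K_trivial_set_def K_trivial_def by auto
        thus ?thesis using c by (simp add: weil_arg_scale power_mult_distrib mult_ac)
      qed
      thus ?thesis using x c unfolding K_trivial_set_def K_trivial_def by auto
    qed
  qed
  thus ?thesis using subfield_0[OF subfield] by simp
qed

lemma card_K_trivial_set: "card (K_trivial_set a) = (card K - 1) * orbit_count a"
  using card_K_minus_1_dvd[of a] unfolding orbit_count_def by simp

lemma weil_sum_eq_orbit_count:
  "weil_sum d a = of_int (int (card K) * (int (orbit_count a) - 1))"
proof -
  define q where "q = card K"
  have q: "q \<ge> 2" using card_K_ge_2 unfolding q_def .
  have S: "card (K_trivial_set a) = (q - 1) * orbit_count a"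
    unfolding q_def by (rule card_K_trivial_set)
  have "of_nat (q - 1) * weil_sum d a =
      of_nat (q - 1) * (of_int (int q * (int (orbit_count a) - 1)) :: complex)"
    using weil_sum_count[of a] q card_UNIV_eq_square unfolding S q_def[symmetric]
    by (simp add: of_nat_diff power2_eq_square algebra_simps)
  thus ?thesis using q unfolding q_def by simp
qed

text \<open>Writing \<open>W(a) = q v(a)\<close>, the two power moments give \<open>\<Sum> v = q\<close> and \<open>\<Sum> v\<^sup>2 = q\<^sup>2\<close>; if
  \<open>v \<ge> 0\<close> on \<open>L\<^sup>\<times>\<close>, this forces a single nonzero value \<open>v(a) = q\<close>.\<close>

lemma exists_orbit_count_0_or_full:
  "(\<exists>a. a \<noteq> 0 \<and> orbit_count a = 0) \<or> (\<exists>a. a \<noteq> 0 \<and> orbit_count a = card K + 1)"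
proof (cases "\<exists>a. a \<noteq> 0 \<and> orbit_count a = 0")
  case False
  define A where "A = UNIV - {0::'a}"
  define v where "v a = int (orbit_count a) - 1" for a
  define q where "q = int (card K)"
  have q: "q > 0" using card_K_ge_2 unfolding q_def by simp
  have v_nonneg: "0 \<le> v a" if "a \<in> A" for a
    using that False unfolding A_def v_def by auto
  have W: "weil_sum d a = of_int (q * v a)" for a
    unfolding q_def v_def by (rule weil_sum_eq_orbit_count)
  have Q: "of_nat (card (UNIV::'a set)) = (of_int (q * q) :: complex)"
    unfolding q_def card_UNIV_eq_square by (simp add: power2_eq_square)
  have W0: "weil_sum d (0::'a) = 0" by (rule weil_sum_0[OF card_UNIV coprime d_nonzero])
  have "of_int (q * (\<Sum>a\<in>A. v a)) = (\<Sum>a\<in>A. weil_sum d a)"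
    unfolding W by (simp add: sum_distrib_left)
  also have "\<dots> = of_int (q * q)"
    using sum_weil_sum[OF card_UNIV coprime d_nonzero] W0 unfolding A_def Q by (simp add: sum_diff1)
  finally have sum_v: "(\<Sum>a\<in>A. v a) = q" using q by (simp only: of_int_eq_iff) simp
  have "of_int (q * q * (\<Sum>a\<in>A. v a * v a)) = (\<Sum>a\<in>A. weil_sum d a * weil_sum d a)"
    unfolding W by (simp add: sum_distrib_left mult_ac)
  also have "\<dots> = of_int (q * q * (q * q))"
    using sum_weil_sum_squared[OF card_UNIV coprime d_nonzero] W0 unfolding A_def Q
    by (simp add: sum_diff1 power2_eq_square)
  finally have squares: "(\<Sum>a\<in>A. v a * v a) = (\<Sum>a\<in>A. v a) * (\<Sum>a\<in>A. v a)"
    using q unfolding sum_v by (simp only: of_int_eq_iff) simp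
  have "\<exists>a\<in>A. v a = (\<Sum>a\<in>A. v a)"
    by (rule exists_eq_sum_if_sum_squares_eq[OF _ v_nonneg squares]) (use sum_v q in \<open>auto simp: A_def\<close>)
  then obtain a where "a \<in> A" "v a = q" unfolding sum_v by blast
  thus ?thesis unfolding A_def v_def q_def by auto
qed simp

lemma psi_trivial_if_full:
  assumes "orbit_count a = card K + 1"
  shows "psi (x powi d) * psi (a * x) = 1"
proof -
  have "card (K_trivial_set a) = (card K - 1) * (card K + 1)"
    using card_K_trivial_set[of a] assms by simp
  also have "\<dots> = card (UNIV - {0::'a})"
    using card_UNIV_eq_square card_K_ge_2 by (simp add: power2_eq_square algebra_simps)
  finally have "K_trivial_set a = UNIV - {0}"
    by (intro card_subset_eq) (auto simp: K_trivial_set_def)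
  hence "K_trivial a x" using K_trivial_0 unfolding K_trivial_set_def by (cases "x = 0") auto
  hence "psi (weil_arg a x) = 1" using subfield_1[OF subfield] unfolding K_trivial_def by force
  thus ?thesis unfolding weil_arg_def by (simp add: psi_add[OF card_UNIV] psi_frobenius[OF card_UNIV])
qed

text \<open>The map \<open>\<tau>\<close> below is an automorphism of \<open>L\<close> fixing \<open>K\<close>.\<close>

lemma power_int_eq_frobenius_if_inverse_additive:
  assumes inverse: "\<And>x::'a. (x powi d) powi u = x" "\<And>x::'a. (x powi u) powi d = x"
    and additive: "\<And>x y::'a. (x + y) powi u = x powi u + y powi u"
  shows "\<exists>i. \<forall>x::'a. x powi d = x ^ (CHAR('a) ^ i)"
proof -
  define \<tau> where "\<tau> x = (x ^ (CHAR('a) ^ j)) powi u" for x :: 'a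
  have \<tau>_power_int: "(\<tau> x) powi d = x ^ (CHAR('a) ^ j)" for x unfolding \<tau>_def by (rule inverse(2))
  have "(\<forall>x. \<tau> x = x) \<or> (\<forall>x. \<tau> x = x ^ card K)"
  proof (rule hom_fixing_K_cases)
    show "\<tau> (x + y) = \<tau> x + \<tau> y" for x y
      unfolding \<tau>_def by (simp add: freshmans_dream'[OF prime_CHAR_finite_field refl] additive)
    show "\<tau> (x * y) = \<tau> x * \<tau> y" for x y
      unfolding \<tau>_def by (simp add: power_mult_distrib power_int_mult_distrib)
    show "\<tau> c = c" if "c \<in> K" for c
      unfolding \<tau>_def power_int_on_K[OF that, symmetric] by (rule inverse(1))
  qed
  thus ?thesis
  proof
    assume "\<forall>x. \<tau> x = x"
    thus ?thesis using \<tau>_power_int by auto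
  next
    assume \<tau>: "\<forall>x. \<tau> x = x ^ card K"
    have "x powi d = x ^ (CHAR('a) ^ (j + n))" for x :: 'a
    proof -
      have "(x powi d) ^ card K = (x ^ card K) powi d"
        by (simp add: power_int_power power_int_power' mult.commute)
      hence "x powi d = ((x ^ card K) powi d) ^ card K"
        using power_card_K_twice[of "x powi d"] by simp
      also have "\<dots> = (x ^ (CHAR('a) ^ j)) ^ (CHAR('a) ^ n)"
        using \<tau>_power_int[of x] \<tau> card_K by simp
      also have "\<dots> = x ^ (CHAR('a) ^ (j + n))"
        by (simp add: power_add power_mult)
      finally show ?thesis .
    qed
    thus ?thesis by blast
  qed
qed

lemma power_int_eq_frobenius_if_psi_trivial:
  assumes "(a::'a) \<noteq> 0" and trivial: "\<And>x. psi (x powi d) * psi (a * x) = 1"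
  shows "\<exists>i. \<forall>x::'a. x powi d = x ^ (CHAR('a) ^ i)"
proof -
  obtain u where u: "\<And>x::'a. (x powi d) powi u = x" "\<And>x::'a. (x powi u) powi d = x"
    using power_int_inverse_exponent[OF card_UNIV coprime d_nonzero] by blast
  have surj: "surj (\<lambda>y::'a. y powi u)" using u(1) by (rule surjI)
  have link: "psi y * psi (a * y powi u) = 1" for y
    using trivial[of "y powi u"] unfolding u(2) .
  have "(\<lambda>y. y powi u) (x + y) = (\<lambda>y. y powi u) x + (\<lambda>y. y powi u) y" for x y :: 'a
    by (rule additive_if_psi_mult_eq_1[OF card_UNIV \<open>a \<noteq> 0\<close>])
       (use surj link in \<open>simp_all add: power_int_mult_distrib\<close>)
  hence "(x + y) powi u = x powi u + y powi u" for x y :: 'a by simp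
  thus ?thesis using u by (intro power_int_eq_frobenius_if_inverse_additive)
qed

lemma exists_weil_sum_eq_minus_card_K:
  assumes "\<not> degenerate CHAR('a) (card (UNIV::'a set)) d"
  shows "\<exists>a::'a. a \<noteq> 0 \<and> weil_sum d a = - of_nat (card K)"
proof -
  have "\<not> (\<exists>a. a \<noteq> 0 \<and> orbit_count a = card K + 1)"
  proof
    assume "\<exists>a. a \<noteq> 0 \<and> orbit_count a = card K + 1"
    then obtain a where "a \<noteq> 0" "orbit_count a = card K + 1" by blast
    then obtain i where "\<forall>x::'a. x powi d = x ^ (CHAR('a) ^ i)"
      using power_int_eq_frobenius_if_psi_trivial psi_trivial_if_full by blast
    thus False using assms degenerate_if_power_int_eq_frobenius by blast
  qed
  then obtain a where "a \<noteq> 0" "orbit_count a = 0" using exists_orbit_count_0_or_full by blast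
  thus ?thesis using weil_sum_eq_orbit_count[of a] by auto
qed

end

theorem corollary4p4:
  fixes K :: "'l::{field,finite} set" and d :: int and n :: nat
  assumes "is_subfield K"
    and "card (UNIV :: 'l set) = card K ^ 2"
    and "card K = CHAR('l) ^ n"
    and "gcd d (int (card (UNIV :: 'l set)) - 1) = 1"
    and "degenerate CHAR('l) (card K) d"
    and "\<not> degenerate CHAR('l) (card (UNIV :: 'l set)) d"
  shows "V_val TYPE('l) d = ereal (real n) \<and>
         (\<exists>a::'l. a \<noteq> 0 \<and> weil_sum d a = - of_nat (card K))"
proof -
  obtain j where "[d = int CHAR('l) ^ j] (mod (int (card K) - 1))"
    using assms(5) unfolding degenerate_def by blast
  then interpret degenerate_exponent K n d j
    using assms(1-4) by unfold_locales
  have p: "CHAR('l) > 1" by (rule prime_gt_1_nat[OF prime_CHAR_finite_field])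
  obtain a\<^sub>0 :: 'l where a\<^sub>0: "a\<^sub>0 \<noteq> 0" "weil_sum d a\<^sub>0 = - of_nat (card K)"
    using exists_weil_sum_eq_minus_card_K assms(6) by blast
  have "V_val TYPE('l) d = ereal (real n)"
    unfolding V_val_def
  proof (rule Min_eqI)
    fix y assume "y \<in> (\<lambda>a::'l. nu_p CHAR('l) (weil_sum d a)) ` (UNIV - {0})"
    then obtain a :: 'l where "y = nu_p CHAR('l) (weil_sum d a)" by blast
    thus "ereal (real n) \<le> y"
      using nu_p_of_int_ge[OF p, of n "int (orbit_count a) - 1"] weil_sum_eq_orbit_count[of a] card_K
      by simp
  next
    show "ereal (real n) \<in> (\<lambda>a::'l. nu_p CHAR('l) (weil_sum d a)) ` (UNIV - {0})"
      using a\<^sub>0 nu_p_minus_power[OF p, of n] card_K by force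
  qed simp
  thus ?thesis using a\<^sub>0 by blast
qed

end
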